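(* Let $n\ge2$ and let $x_1,\dots,x_n,y_1,\dots,y_{n-1}$ be the distinct elements of $[2n-1]$. Let $u$ be the tableau of shape $2^{n-1}1$ with first column $x_1,\dots,x_n$ and second column $y_1,\dots,y_{n-1}$, and for $i\in[n]$ let $s_i$ be the tableau of shape $2^{n-1}1$ with first column $y_1,\dots,y_{n-1},x_i$ and second column $x_1,\dots,\widehat{x_i},\dots,x_n$ (top to bottom). Then in $S^{2^{n-1}1}$, \[\varepsilon_u=\sum_{i=1}^n(-1)^{n-i}\varepsilon_{s_i}.\] Consequently $\tilde\Psi\circ\varphi=0$ on $V_{n,3}$.
   Context: For a tableau $t$ (filling of a Young diagram using each element of $[N]$ once) with column stabilizer $C_t$, $\{t\}$ is its row tabloid and $\varepsilon_t=\sum_{\beta\in C_t}\operatorname{sgn}(\beta)\{\beta t\}$; $S^\lambda$ is the Specht module spanned by the $\varepsilon_t$. $V_{n,3}$ is the $\mathbb C$-span of left-comb brackets $[[x_1,\dots,x_n],y_1,\dots,y_{n-1}]$ with $\{x_i\}\cup\{y_j\}=[2n-1]$, modulo antisymmetry in the $x$'s and separately in the $y$'s. $\varphi:V_{n,3}\to V_{n,3}$ is $\varphi([[x_1,\dots,x_n],y_1,\dots,y_{n-1}])=[[x_1,\dots,x_n],y_1,\dots,y_{n-1}]-\sum_{i=1}^n(-1)^{n-i}[[y_1,\dots,y_{n-1},x_i],x_1,\dots,\widehat{x_i},\dots,x_n]$, and $\tilde\Psi:V_{n,3}\to S^{2^{n-1}1}$ sends $[[x_1,\dots,x_n],y_1,\dots,y_{n-1}]$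 to $\varepsilon_t$, $t$ the tableau with first column the $x$'s and second column the $y$'s. *)

theory Defs
  imports Complex_Main "HOL-Combinatorics.Combinatorics"
begin

text \<open>Young diagrams: a shape is a list of row lengths; cells are (row, column), 0-indexed.\<close>
definition cells :: "nat list \<Rightarrow> (nat \<times> nat) set" where
  "cells la = {(i, j). i < length la \<and> j < la ! i}"

definition is_tableau :: "nat list \<Rightarrow> nat \<Rightarrow> (nat \<times> nat \<Rightarrow> nat) \<Rightarrow> bool" where
  "is_tableau la N t \<longleftrightarrow> bij_betw t (cells la) {1..N}"

text \<open>Row tabloid {t}, represented canonically as the map sending each entry to (1 + its row index)
  (entries not occurring are sent to 0).  Two tableaux have the same tabloid iff they are
  row-equivalent.\<close>
definition tabloid :: "nat list \<Rightarrow> (nat \<times> nat \<Rightarrow> nat) \<Rightarrow> (nat \<Rightarrow> nat)" where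
  "tabloid la t = (\<lambda>k. if k \<in> t ` cells la then Suc (fst (inv_into (cells la) t k)) else 0)"

definition col_stab :: "nat list \<Rightarrow> nat \<Rightarrow> (nat \<times> nat \<Rightarrow> nat) \<Rightarrow> (nat \<Rightarrow> nat) set" where
  "col_stab la N t = {\<beta>. \<beta> permutes {1..N} \<and>
      (\<forall>c\<in>cells la. \<exists>c'\<in>cells la. snd c' = snd c \<and> \<beta> (t c) = t c')}"

text \<open>Elements of the permutation module M^la are complex-valued functions on tabloids;
  the polytabloid eps_t = sum over beta in C_t of sgn(beta) {beta t}.\<close>
definition polytabloid :: "nat list \<Rightarrow> nat \<Rightarrow> (nat \<times> nat \<Rightarrow> nat) \<Rightarrow> ((nat \<Rightarrow> nat) \<Rightarrow> complex)" where
  "polytabloid la N t = (\<lambda>T. \<Sum>\<beta>\<in>col_stab la N t.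
      of_int (sign \<beta>) * (if tabloid la (\<beta> \<circ> t) = T then 1 else 0))"

definition hook_shape :: "nat \<Rightarrow> nat list" where
  "hook_shape n = replicate (n - 1) 2 @ [1]"

definition tab_cols :: "nat list \<Rightarrow> nat list \<Rightarrow> (nat \<times> nat \<Rightarrow> nat)" where
  "tab_cols c1 c2 = (\<lambda>(r, c). if c = 0 then c1 ! r else c2 ! r)"

text \<open>Left-comb brackets [[x_1..x_n], y_1..y_(n-1)] are represented by the pair (xs, ys).\<close>
definition valid_bracket :: "nat \<Rightarrow> nat list \<times> nat list \<Rightarrow> bool" where
  "valid_bracket n b \<longleftrightarrow> length (fst b) = n \<and> length (snd b) = n - 1 \<and>
      distinct (fst b @ snd b) \<and> set (fst b @ snd b) = {1..2*n-1}"

text \<open>phi on a generating bracket, as a formal linear combination of brackets.\<close>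
definition phi_gen :: "nat \<Rightarrow> nat list \<times> nat list \<Rightarrow> (nat list \<times> nat list \<Rightarrow> complex)" where
  "phi_gen n b = (\<lambda>b'. (if b' = b then 1 else 0)
      - (\<Sum>i<n. (-1) ^ (n - 1 - i) *
          (if b' = (snd b @ [fst b ! i], take i (fst b) @ drop (Suc i) (fst b)) then 1 else 0)))"

text \<open>Linear extensions to formal linear combinations of valid brackets (the free vector space
  covering V_{n,3}).\<close>
definition phi_lin :: "nat \<Rightarrow> (nat list \<times> nat list \<Rightarrow> complex) \<Rightarrow> (nat list \<times> nat list \<Rightarrow> complex)" where
  "phi_lin n c = (\<lambda>b'. \<Sum>b\<in>{b. valid_bracket n b}. c b * phi_gen n b b')"

definition Psi_lin :: "nat \<Rightarrow> (nat list \<times> nat list \<Rightarrow> complex) \<Rightarrow> ((nat \<Rightarrow> nat) \<Rightarrow> complex)" where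
  "Psi_lin n c = (\<lambda>T. \<Sum>b\<in>{b. valid_bracket n b}.
      c b * polytabloid (hook_shape n) (2*n-1) (tab_cols (fst b) (snd b)) T)"

end

theory Submission
  imports Defs "Jordan_Normal_Form.Determinant"
begin

text \<open>
  For the tableau t with columns c1 and c2 the column stabiliser is the product of the
  symmetric groups of the two columns, and the condition that the tabloid of \<open>\<beta> t\<close> equals T
  splits into one condition per column.  Hence \<open>\<epsilon>\<^sub>t(T) = det A(c1) \<cdot> det A(c2)\<close>, where
  \<open>A(L)\<close> is the 0/1 matrix whose entry (r, k) records that the k-th entry of L lies in row r
  of T.  The relation between polytabloids thus becomes the exchange identity
  \<open>det A(x) det A(y) = \<Sum>\<^sub>i (-1)\<^sup>n\<^sup>-\<^sup>i det A(y, x\<^sub>i) det A(x - x\<^sub>i)\<close>: expand \<open>det A(y, x\<^sub>i)\<close> along its last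
  column; summing over i, the entries of A(x) meet the cofactors of the last row of A(x),
  which leaves only \<open>det A(x)\<close> times the minor \<open>A(y)\<close>.  Applying the relation to every
  bracket gives \<open>\<Psi> \<circ> \<phi> = 0\<close>.
\<close>

section \<open>Permutations of a disjoint union\<close>

lemma permutes_restrict_id_stable:
  assumes \<beta>: "\<beta> permutes A \<union> B" and "\<beta> ` A \<subseteq> A" and "\<beta> ` B \<subseteq> B" and disj: "A \<inter> B = {}"
  shows "restrict_id \<beta> A permutes A"
proof -
  have "A \<subseteq> \<beta> ` A"
  proof
    fix y assume "y \<in> A"
    then obtain x where x: "x \<in> A \<union> B" "y = \<beta> x"
      using permutes_image[OF \<beta>] by (metis UnI1 imageE)
    then have "x \<notin> B" using \<open>y \<in> A\<close> \<open>\<beta> ` B \<subseteq> B\<close> disj by blast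
    then show "y \<in> \<beta> ` A" using x by blast
  qed
  then have "bij_betw \<beta> A A"
    using \<open>\<beta> ` A \<subseteq> A\<close> permutes_inj_on[OF \<beta>] by (auto simp: bij_betw_def)
  then show ?thesis
    by (rule permutes_restrict_id)
qed

lemma bij_betw_compose_permutes_disjoint:
  assumes disj: "A \<inter> B = {}"
  shows "bij_betw (\<lambda>(p, q). p \<circ> q) ({p. p permutes A} \<times> {q. q permutes B})
           {\<beta>. \<beta> permutes A \<union> B \<and> \<beta> ` A \<subseteq> A \<and> \<beta> ` B \<subseteq> B}"
proof (rule bij_betw_byWitness[where f' = "\<lambda>\<beta>. (restrict_id \<beta> A, restrict_id \<beta> B)"])
  have compose_on_A: "(p \<circ> q) x = p x" if "q permutes B" and "x \<in> A" for p q x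
  proof -
    have "x \<notin> B" using \<open>x \<in> A\<close> disj by blast
    then show ?thesis using permutes_not_in[OF \<open>q permutes B\<close>] by simp
  qed
  have compose_on_B: "(p \<circ> q) y = q y" if "p permutes A" "q permutes B" and "y \<in> B" for p q y
  proof -
    have "q y \<in> B" using \<open>y \<in> B\<close> \<open>q permutes B\<close> by (simp add: permutes_in_image)
    then have "q y \<notin> A" using disj by blast
    then show ?thesis using permutes_not_in[OF \<open>p permutes A\<close>] by simp
  qed
  show "\<forall>pq \<in> {p. p permutes A} \<times> {q. q permutes B}.
      (\<lambda>\<beta>. (restrict_id \<beta> A, restrict_id \<beta> B)) ((\<lambda>(p, q). p \<circ> q) pq) = pq"
  proof (clarify, intro conjI ext)
    fix p q x assume p: "p permutes A" and q: "q permutes B"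
    show "restrict_id (p \<circ> q) A x = p x"
      using compose_on_A[OF q] permutes_not_in[OF p] by (cases "x \<in> A") auto
    show "restrict_id (p \<circ> q) B x = q x"
      using compose_on_B[OF p q] permutes_not_in[OF q] by (cases "x \<in> B") auto
  qed
  show "(\<lambda>(p, q). p \<circ> q) ` ({p. p permutes A} \<times> {q. q permutes B})
      \<subseteq> {\<beta>. \<beta> permutes A \<union> B \<and> \<beta> ` A \<subseteq> A \<and> \<beta> ` B \<subseteq> B}"
  proof clarify
    fix p q assume p: "p permutes A" and q: "q permutes B"
    have "p \<circ> q permutes A \<union> B"
      by (intro permutes_compose permutes_subset[OF p] permutes_subset[OF q]) auto
    moreover have "(p \<circ> q) ` A \<subseteq> A"
      using compose_on_A[OF q, of _ p] permutes_in_image[OF p] by (auto simp del: o_apply)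
    moreover have "(p \<circ> q) ` B \<subseteq> B"
      using compose_on_B[OF p q] permutes_in_image[OF q] by (auto simp del: o_apply)
    ultimately show "p \<circ> q permutes A \<union> B \<and> (p \<circ> q) ` A \<subseteq> A \<and> (p \<circ> q) ` B \<subseteq> B"
      by blast
  qed
  have restrict_ok: "restrict_id \<beta> A permutes A \<and> restrict_id \<beta> B permutes B \<and>
      restrict_id \<beta> A \<circ> restrict_id \<beta> B = \<beta>"
    if "\<beta> \<in> {\<beta>. \<beta> permutes A \<union> B \<and> \<beta> ` A \<subseteq> A \<and> \<beta> ` B \<subseteq> B}" for \<beta>
  proof -
    from that have \<beta>: "\<beta> permutes A \<union> B" "\<beta> ` A \<subseteq> A" "\<beta> ` B \<subseteq> B" by auto
    have "restrict_id \<beta> A \<circ> restrict_id \<beta> B = \<beta>"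
    proof
      fix x show "(restrict_id \<beta> A \<circ> restrict_id \<beta> B) x = \<beta> x"
      proof (cases "x \<in> B")
        case True
        then have "\<beta> x \<notin> A" using \<beta>(3) disj by blast
        then show ?thesis using True by simp
      next
        case False
        then show ?thesis using permutes_not_in[OF \<beta>(1)] by (cases "x \<in> A") auto
      qed
    qed
    moreover have "restrict_id \<beta> A permutes A"
      using \<beta> disj by (rule permutes_restrict_id_stable)
    moreover have "restrict_id \<beta> B permutes B"
      using \<beta> disj by (intro permutes_restrict_id_stable[of \<beta> B A]) (auto simp: Un_commute)
    ultimately show ?thesis by blast
  qed
  then show "\<forall>\<beta> \<in> {\<beta>. \<beta> permutes A \<union> B \<and> \<beta> ` A \<subseteq> A \<and> \<beta> ` B \<subseteq> B}.
      (\<lambda>(p, q). p \<circ> q) (restrict_id \<beta> A, restrict_id \<beta> B) = \<beta>"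
    and "(\<lambda>\<beta>. (restrict_id \<beta> A, restrict_id \<beta> B)) ` {\<beta>. \<beta> permutes A \<union> B \<and> \<beta> ` A \<subseteq> A \<and> \<beta> ` B \<subseteq> B}
      \<subseteq> {p. p permutes A} \<times> {q. q permutes B}"
    by auto
qed

lemma bij_betw_map_permutation:
  assumes f: "bij_betw f A B"
  shows "bij_betw (map_permutation A f) {p. p permutes A} {q. q permutes B}"
proof (rule bij_betw_byWitness[where f' = "map_permutation B (inv_into A f)"])
  have inv: "bij_betw (inv_into A f) B A"
    using f by (rule bij_betw_inv_into)
  show "\<forall>p\<in>{p. p permutes A}. map_permutation B (inv_into A f) (map_permutation A f p) = p"
    using map_permutation_compose_inv[OF f] bij_betw_inv_into_left[OF f] by simp
  show "\<forall>q\<in>{q. q permutes B}. map_permutation A f (map_permutation B (inv_into A f) q) = q"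
    using map_permutation_compose_inv[OF inv] bij_betw_inv_into_right[OF f] by simp
  show "map_permutation A f ` {p. p permutes A} \<subseteq> {q. q permutes B}"
    using map_permutation_permutes[OF f] by auto
  show "map_permutation B (inv_into A f) ` {q. q permutes B} \<subseteq> {p. p permutes A}"
    using map_permutation_permutes[OF inv] by auto
qed

section \<open>Determinants of matrices given by their columns\<close>

definition col_mat :: "('a \<Rightarrow> nat \<Rightarrow> 'b) \<Rightarrow> nat \<Rightarrow> 'a list \<Rightarrow> 'b mat" where
  "col_mat F d L = mat d d (\<lambda>(r, k). F (L ! k) r)"

lemma col_mat_carrier [simp]: "col_mat F d L \<in> carrier_mat d d"
  by (simp add: col_mat_def)

lemma det_col_mat_sum_permutes:
  fixes F :: "'a \<Rightarrow> nat \<Rightarrow> 'b :: comm_ring_1"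
  assumes "distinct L" and "length L = d"
  shows "det (col_mat F d L) = (\<Sum>\<sigma> | \<sigma> permutes set L. of_int (sign \<sigma>) * (\<Prod>r<d. F (\<sigma> (L ! r)) r))"
proof -
  have bij: "bij_betw ((!) L) {..<d} (set L)"
    using assms by (intro bij_betw_nth) auto
  have "det (col_mat F d L) = (\<Sum>p | p permutes {..<d}. of_int (sign p) * (\<Prod>r<d. F (L ! p r) r))"
    unfolding det_def'[OF col_mat_carrier] atLeast0LessThan
  proof (intro sum.cong refl arg_cong2[where f = "(*)"] prod.cong)
    fix p r assume "p \<in> {p. p permutes {..<d}}" "r \<in> {..<d}"
    then have "p r < d" using permutes_in_image[of p "{..<d}" r] by simp
    then show "col_mat F d L $$ (r, p r) = F (L ! p r) r"
      using \<open>r \<in> {..<d}\<close> by (simp add: col_mat_def)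
  qed
  also have "\<dots> = (\<Sum>p | p permutes {..<d}. of_int (sign (map_permutation {..<d} ((!) L) p)) *
      (\<Prod>r<d. F (map_permutation {..<d} ((!) L) p (L ! r)) r))"
    using bij_betw_imp_inj_on[OF bij]
    by (intro sum.cong refl arg_cong2[where f = "(*)"] prod.cong)
       (auto simp: sign_map_permutation map_permutation_apply)
  also have "\<dots> = (\<Sum>\<sigma> | \<sigma> permutes set L. of_int (sign \<sigma>) * (\<Prod>r<d. F (\<sigma> (L ! r)) r))"
    by (rule sum.reindex_bij_betw[OF bij_betw_map_permutation[OF bij]])
  finally show ?thesis .
qed

lemma sum_row_times_cofactor:
  assumes A: "A \<in> carrier_mat n n" and "r < n" and "j < n"
  shows "(\<Sum>k<n. A $$ (r, k) * cofactor A j k) = (if r = j then det A else 0)"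
proof -
  have "(\<Sum>k<n. A $$ (r, k) * cofactor A j k) = (A * adj_mat A) $$ (r, j)"
    unfolding times_mat_def scalar_prod_def adj_mat_def using assms by (auto intro: sum.cong)
  also have "\<dots> = (det A \<cdot>\<^sub>m 1\<^sub>m n) $$ (r, j)"
    using adj_mat(2)[OF A] by simp
  finally show ?thesis using assms by simp
qed

lemma nth_take_drop_Suc:
  assumes "k < length xs - 1" and "i < length xs"
  shows "(take i xs @ drop (Suc i) xs) ! k = xs ! (if k < i then k else Suc k)"
  using assms by (auto simp: nth_append min_def)

lemma det_col_mat_snoc:
  fixes F :: "'a \<Rightarrow> nat \<Rightarrow> 'b :: comm_ring_1"
  assumes "length ys = m"
  shows "det (col_mat F (Suc m) (ys @ [x])) =
    (\<Sum>r\<le>m. (-1) ^ (r + m) * det (col_mat (\<lambda>a k. F a (if k < r then k else Suc k)) m ys) * F x r)"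
proof -
  have "det (col_mat F (Suc m) (ys @ [x])) =
      (\<Sum>r<Suc m. col_mat F (Suc m) (ys @ [x]) $$ (r, m) * cofactor (col_mat F (Suc m) (ys @ [x])) r m)"
    by (rule laplace_expansion_column) auto
  also have "\<dots> = (\<Sum>r\<le>m. (-1) ^ (r + m) * det (col_mat (\<lambda>a k. F a (if k < r then k else Suc k)) m ys) * F x r)"
  proof (rule sum.cong)
    fix r assume "r \<in> {..m}"
    then have "mat_delete (col_mat F (Suc m) (ys @ [x])) r m = col_mat (\<lambda>a k. F a (if k < r then k else Suc k)) m ys"
      by (intro eq_matI) (auto simp: col_mat_def mat_delete_def nth_append assms)
    then show "col_mat F (Suc m) (ys @ [x]) $$ (r, m) * cofactor (col_mat F (Suc m) (ys @ [x])) r m =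
        (-1) ^ (r + m) * det (col_mat (\<lambda>a k. F a (if k < r then k else Suc k)) m ys) * F x r"
      using \<open>r \<in> {..m}\<close> assms by (simp add: col_mat_def cofactor_def nth_append mult.commute)
  qed (simp add: lessThan_Suc_atMost)
  finally show ?thesis .
qed

lemma det_col_mat_exchange:
  fixes F :: "'a \<Rightarrow> nat \<Rightarrow> 'b :: comm_ring_1"
  assumes xs: "length xs = Suc m" and ys: "length ys = m"
  shows "det (col_mat F (Suc m) xs) * det (col_mat F m ys) =
    (\<Sum>i\<le>m. (-1) ^ (m - i) *
       (det (col_mat F (Suc m) (ys @ [xs ! i])) * det (col_mat F m (take i xs @ drop (Suc i) xs))))"
proof -
  define A where "A = col_mat F (Suc m) xs"
  define Y where "Y r = col_mat (\<lambda>a k. F a (if k < r then k else Suc k)) m ys" for r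
  have minor: "col_mat F m (take i xs @ drop (Suc i) xs) = mat_delete A m i" if "i \<le> m" for i
    by (rule eq_matI) (use that xs in \<open>auto simp: A_def col_mat_def mat_delete_def nth_take_drop_Suc\<close>)
  have sign: "(-1) ^ (m - i) * det (mat_delete A m i) = cofactor A m i" if "i \<le> m" for i
  proof -
    have "m + i = (m - i) + 2 * i" using that by simp
    then have "(-1 :: 'b) ^ (m + i) = (-1) ^ (m - i) * ((-1) ^ 2) ^ i"
      by (simp only: power_add power_mult)
    then show ?thesis by (simp add: cofactor_def)
  qed
  have "(\<Sum>i\<le>m. (-1) ^ (m - i) *
       (det (col_mat F (Suc m) (ys @ [xs ! i])) * det (col_mat F m (take i xs @ drop (Suc i) xs)))) =
     (\<Sum>i\<le>m. \<Sum>r\<le>m. (-1) ^ (r + m) * det (Y r) * (A $$ (r, i) * cofactor A m i))"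
  proof (rule sum.cong[OF refl])
    fix i assume "i \<in> {..m}"
    moreover have "F (xs ! i) r = A $$ (r, i)" if "r \<le> m" for r
      using that \<open>i \<in> {..m}\<close> xs by (simp add: A_def col_mat_def)
    ultimately show "(-1) ^ (m - i) *
       (det (col_mat F (Suc m) (ys @ [xs ! i])) * det (col_mat F m (take i xs @ drop (Suc i) xs))) =
       (\<Sum>r\<le>m. (-1) ^ (r + m) * det (Y r) * (A $$ (r, i) * cofactor A m i))"
      by (simp add: det_col_mat_snoc[OF ys] minor Y_def flip: sign)
         (simp add: sum_distrib_left sum_distrib_right ac_simps)
  qed
  also have "\<dots> = (\<Sum>r\<le>m. (-1) ^ (r + m) * det (Y r) * (\<Sum>i<Suc m. A $$ (r, i) * cofactor A m i))"
    by (subst sum.swap) (simp add: sum_distrib_left lessThan_Suc_atMost)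
  also have "\<dots> = (\<Sum>r\<le>m. (-1) ^ (r + m) * det (Y r) * (if r = m then det A else 0))"
    by (intro sum.cong refl, subst sum_row_times_cofactor) (auto simp: A_def)
  also have "\<dots> = det (Y m) * det A"
    by (simp add: if_distrib[of "\<lambda>x. _ * x"] sum.delta' cong: if_cong flip: mult_2)
  also have "Y m = col_mat F m ys"
    by (rule eq_matI) (auto simp: Y_def col_mat_def)
  finally show ?thesis by (simp add: A_def mult.commute)
qed

section \<open>Two-column tableaux\<close>

lemma mem_cells_hook_shape:
  assumes "n \<ge> 1"
  shows "(r, j) \<in> cells (hook_shape n) \<longleftrightarrow> r < n \<and> (j = 0 \<or> j = 1 \<and> r < n - 1)"
proof -
  have "length (hook_shape n) = n"
    using assms by (simp add: hook_shape_def)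
  moreover have "hook_shape n ! r = (if r < n - 1 then 2 else 1)" if "r < n"
    using assms that by (auto simp: hook_shape_def nth_append)
  ultimately show ?thesis
    by (auto simp: cells_def split: if_splits)
qed

lemma cells_hook_shape:
  assumes "n \<ge> 1"
  shows "cells (hook_shape n) = (\<lambda>r. (r, 0)) ` {..<n} \<union> (\<lambda>r. (r, 1)) ` {..<n - 1}"
  using mem_cells_hook_shape[OF assms] by auto

lemma ball_cells_hook_shape:
  assumes "n \<ge> 1"
  shows "(\<forall>c\<in>cells (hook_shape n). P c) \<longleftrightarrow> (\<forall>r<n. P (r, 0)) \<and> (\<forall>r<n - 1. P (r, 1))"
  by (auto simp: cells_hook_shape[OF assms])

lemma bex_cells_hook_shape:
  assumes "n \<ge> 1"
  shows "(\<exists>c\<in>cells (hook_shape n). P c) \<longleftrightarrow> (\<exists>r<n. P (r, 0)) \<or> (\<exists>r<n - 1. P (r, 1))"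
  by (auto simp: cells_hook_shape[OF assms])

lemma tab_cols_image_hook_shape:
  assumes "n \<ge> 1" and "length c1 = n" and "length c2 = n - 1"
  shows "tab_cols c1 c2 ` cells (hook_shape n) = set c1 \<union> set c2"
  using assms by (auto simp: cells_hook_shape tab_cols_def image_Un image_image set_conv_nth)

lemma is_tableau_tab_cols:
  assumes "n \<ge> 1" and "length c1 = n" and "length c2 = n - 1"
    and "distinct (c1 @ c2)" and "set (c1 @ c2) = {1..N}"
  shows "is_tableau (hook_shape n) N (tab_cols c1 c2)"
proof -
  have "c1 ! r \<noteq> c2 ! r'" "c2 ! r' \<noteq> c1 ! r" if "r < n" "r' < n - 1" for r r'
  proof -
    have "c1 ! r \<in> set c1" "c2 ! r' \<in> set c2"
      using assms(2,3) that by simp_all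
    then show "c1 ! r \<noteq> c2 ! r'" "c2 ! r' \<noteq> c1 ! r" using assms(4) by auto
  qed
  then have "inj_on (tab_cols c1 c2) (cells (hook_shape n))"
    using assms unfolding cells_hook_shape[OF assms(1)]
    by (auto simp: inj_on_def tab_cols_def nth_eq_iff_index_eq)
  then show ?thesis
    using tab_cols_image_hook_shape[OF assms(1-3)] assms(5)
    by (simp add: is_tableau_def bij_betw_def)
qed

lemma is_tableau_permute:
  assumes "is_tableau la N t" and "\<beta> permutes {1..N}"
  shows "is_tableau la N (\<beta> \<circ> t)"
  using assms unfolding is_tableau_def by (blast intro: bij_betw_trans permutes_imp_bij)

lemma col_stab_tab_cols:
  assumes "n \<ge> 1" and "length c1 = n" and "length c2 = n - 1"
  shows "col_stab (hook_shape n) N (tab_cols c1 c2) =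
    {\<beta>. \<beta> permutes {1..N} \<and> \<beta> ` set c1 \<subseteq> set c1 \<and> \<beta> ` set c2 \<subseteq> set c2}"
proof -
  have ex_nth: "(\<exists>r'<n. y = c1 ! r') \<longleftrightarrow> y \<in> set c1" "(\<exists>r'<n - 1. y = c2 ! r') \<longleftrightarrow> y \<in> set c2" for y
    using assms(2,3) by (auto simp: in_set_conv_nth)
  have all_nth: "(\<forall>r<n. \<beta> (c1 ! r) \<in> set c1) \<longleftrightarrow> \<beta> ` set c1 \<subseteq> set c1"
    "(\<forall>r<n - 1. \<beta> (c2 ! r) \<in> set c2) \<longleftrightarrow> \<beta> ` set c2 \<subseteq> set c2" for \<beta> :: "nat \<Rightarrow> nat"
    using assms(2,3) by (auto simp: image_subset_iff all_set_conv_all_nth)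
  have "(\<forall>c\<in>cells (hook_shape n). \<exists>c'\<in>cells (hook_shape n).
           snd c' = snd c \<and> \<beta> (tab_cols c1 c2 c) = tab_cols c1 c2 c') \<longleftrightarrow>
        \<beta> ` set c1 \<subseteq> set c1 \<and> \<beta> ` set c2 \<subseteq> set c2" for \<beta>
    by (simp add: ball_cells_hook_shape[OF assms(1)] bex_cells_hook_shape[OF assms(1)]
        tab_cols_def ex_nth[simplified] all_nth[simplified])
  then show ?thesis
    by (auto simp: col_stab_def)
qed

lemma tabloid_eq_iff:
  assumes "is_tableau la N t"
  shows "tabloid la t = T \<longleftrightarrow>
    (\<forall>k. k \<notin> {1..N} \<longrightarrow> T k = 0) \<and> (\<forall>c\<in>cells la. T (t c) = Suc (fst c))"
proof -
  have img: "t ` cells la = {1..N}" and inj: "inj_on t (cells la)"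
    using assms by (auto simp: is_tableau_def bij_betw_def)
  show ?thesis
  proof
    assume "tabloid la t = T"
    then show "(\<forall>k. k \<notin> {1..N} \<longrightarrow> T k = 0) \<and> (\<forall>c\<in>cells la. T (t c) = Suc (fst c))"
      using img inj by (auto simp: tabloid_def)
  next
    assume T: "(\<forall>k. k \<notin> {1..N} \<longrightarrow> T k = 0) \<and> (\<forall>c\<in>cells la. T (t c) = Suc (fst c))"
    show "tabloid la t = T"
    proof
      fix k show "tabloid la t k = T k"
      proof (cases "k \<in> t ` cells la")
        case True
        then obtain c where "c \<in> cells la" "k = t c" by blast
        then show ?thesis using T inj by (simp add: tabloid_def)
      qed (use T img in \<open>simp add: tabloid_def\<close>)
    qed
  qed
qed

text \<open>\<open>T a = Suc r\<close> says that T puts the entry a into row r: the encoding of tabloids shifts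
  row indices by one.\<close>

definition row_indicator :: "(nat \<Rightarrow> nat) \<Rightarrow> nat \<Rightarrow> nat \<Rightarrow> complex" where
  "row_indicator T a r = (if T a = Suc r then 1 else 0)"

lemma prod_row_indicator:
  "(\<Prod>r<d. row_indicator T (f r) r) = (if \<forall>r<d. T (f r) = Suc r then 1 else 0)"
  by (induction d) (auto simp: row_indicator_def less_Suc_eq)

lemma tabloid_comp_tab_cols_eq_iff:
  assumes n: "n \<ge> 1" and len: "length c1 = n" "length c2 = n - 1"
    and dist: "distinct (c1 @ c2)" and entries: "set (c1 @ c2) = {1..N}"
    and p: "p permutes set c1" and q: "q permutes set c2"
  shows "tabloid (hook_shape n) (p \<circ> q \<circ> tab_cols c1 c2) = T \<longleftrightarrow>
    (\<forall>k. k \<notin> {1..N} \<longrightarrow> T k = 0) \<and> (\<forall>r<n. T (p (c1 ! r)) = Suc r) \<and>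
    (\<forall>r<n - 1. T (q (c2 ! r)) = Suc r)"
proof -
  have disj: "set c1 \<inter> set c2 = {}" and N: "{1..N} = set c1 \<union> set c2"
    using dist entries by auto
  have "c1 ! r \<notin> set c2" if "r < n" for r
    using that len disj nth_mem[of r c1] by blast
  then have on_c1: "(p \<circ> q) (c1 ! r) = p (c1 ! r)" if "r < n" for r
    using that permutes_not_in[OF q] by simp
  have "q (c2 ! r) \<in> set c2" if "r < n - 1" for r
    using that len permutes_in_image[OF q] by simp
  then have on_c2: "(p \<circ> q) (c2 ! r) = q (c2 ! r)" if "r < n - 1" for r
    using that disj permutes_not_in[OF p] by auto
  have pq: "p \<circ> q permutes {1..N}"
    unfolding N by (intro permutes_compose permutes_subset[OF p] permutes_subset[OF q]) auto
  show ?thesis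
    unfolding tabloid_eq_iff[OF is_tableau_permute[OF is_tableau_tab_cols[OF n len dist entries] pq]]
    using on_c1 on_c2 by (simp add: ball_cells_hook_shape[OF n] tab_cols_def)
qed

lemma polytabloid_tab_cols_eq_det:
  assumes n: "n \<ge> 1" and len: "length c1 = n" "length c2 = n - 1"
    and dist: "distinct (c1 @ c2)" and entries: "set (c1 @ c2) = {1..N}"
  shows "polytabloid (hook_shape n) N (tab_cols c1 c2) T =
    (if \<forall>k. k \<notin> {1..N} \<longrightarrow> T k = 0 then 1 else 0) *
    det (col_mat (row_indicator T) n c1) * det (col_mat (row_indicator T) (n - 1) c2)"
proof -
  define Z :: complex where "Z = (if \<forall>k. k \<notin> {1..N} \<longrightarrow> T k = 0 then 1 else 0)"
  define w where "w d L \<sigma> = of_int (sign \<sigma>) * (\<Prod>r<d. row_indicator T (\<sigma> (L ! r)) r)"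
    for d L and \<sigma> :: "nat \<Rightarrow> nat"
  have disj: "set c1 \<inter> set c2 = {}" and N: "{1..N} = set c1 \<union> set c2"
    using dist entries by auto
  have summand: "of_int (sign (p \<circ> q)) * (if tabloid (hook_shape n) (p \<circ> q \<circ> tab_cols c1 c2) = T then 1 else 0)
      = Z * (w n c1 p * w (n - 1) c2 q)"
    if p: "p permutes set c1" and q: "q permutes set c2" for p q
  proof -
    have "sign (p \<circ> q) = sign p * sign q"
      by (intro sign_compose permutes_imp_permutation[OF _ p] permutes_imp_permutation[OF _ q]) simp_all
    then show ?thesis
      using tabloid_comp_tab_cols_eq_iff[OF assms p q]
      by (auto simp: Z_def w_def prod_row_indicator)
  qed
  have "polytabloid (hook_shape n) N (tab_cols c1 c2) T =
      (\<Sum>\<beta> | \<beta> permutes set c1 \<union> set c2 \<and> \<beta> ` set c1 \<subseteq> set c1 \<and> \<beta> ` set c2 \<subseteq> set c2.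
         of_int (sign \<beta>) * (if tabloid (hook_shape n) (\<beta> \<circ> tab_cols c1 c2) = T then 1 else 0))"
    unfolding polytabloid_def col_stab_tab_cols[OF n len] N ..
  also have "\<dots> = (\<Sum>(p, q) \<in> {p. p permutes set c1} \<times> {q. q permutes set c2}. Z * (w n c1 p * w (n - 1) c2 q))"
    by (subst sum.reindex_bij_betw[OF bij_betw_compose_permutes_disjoint[OF disj], symmetric])
       (auto intro!: sum.cong simp: summand)
  also have "\<dots> = Z * ((\<Sum>p | p permutes set c1. w n c1 p) * (\<Sum>q | q permutes set c2. w (n - 1) c2 q))"
    unfolding sum_product sum.cartesian_product by (simp add: sum_distrib_left case_prod_unfold)
  also have "\<dots> = Z * (det (col_mat (row_indicator T) n c1) * det (col_mat (row_indicator T) (n - 1) c2))"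
    using dist len by (simp add: w_def det_col_mat_sum_permutes)
  finally show ?thesis
    by (simp add: Z_def)
qed

section \<open>Exchanging a column entry\<close>

lemma mset_exchange_nth:
  assumes "i < length xs"
  shows "mset ((ys @ [xs ! i]) @ take i xs @ drop (Suc i) xs) = mset (xs @ ys)"
proof -
  have "mset xs = mset (take i xs @ xs ! i # drop (Suc i) xs)"
    using id_take_nth_drop[OF assms] by simp
  then show ?thesis by (simp add: ac_simps)
qed

lemma polytabloid_hook_exchange:
  assumes n: "n \<ge> 1" and len: "length xs = n" "length ys = n - 1"
    and dist: "distinct (xs @ ys)" and entries: "set (xs @ ys) = {1..2*n-1}"
  shows "polytabloid (hook_shape n) (2*n-1) (tab_cols xs ys) =
    (\<lambda>T. \<Sum>i<n. (-1) ^ (n - 1 - i) *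
       polytabloid (hook_shape n) (2*n-1) (tab_cols (ys @ [xs ! i]) (take i xs @ drop (Suc i) xs)) T)"
proof
  fix T :: "nat \<Rightarrow> nat"
  define Z :: complex where "Z = (if \<forall>k. k \<notin> {1..2*n-1} \<longrightarrow> T k = 0 then 1 else 0)"
  define D where "D d L = det (col_mat (row_indicator T) d L)" for d L
  have exchanged: "polytabloid (hook_shape n) (2*n-1) (tab_cols (ys @ [xs ! i]) (take i xs @ drop (Suc i) xs)) T
      = Z * D n (ys @ [xs ! i]) * D (n - 1) (take i xs @ drop (Suc i) xs)" if "i < n" for i
  proof -
    have ms: "mset ((ys @ [xs ! i]) @ take i xs @ drop (Suc i) xs) = mset (xs @ ys)"
      using that len by (intro mset_exchange_nth) simp
    show ?thesis
      unfolding Z_def D_def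
      by (rule polytabloid_tab_cols_eq_det)
         (use that n len dist entries mset_eq_setD[OF ms] mset_eq_imp_distinct_iff[OF ms] in simp_all)
  qed
  obtain m where m: "n = Suc m" using n by (cases n) auto
  with len have len_m: "length xs = Suc m" "length ys = m" by simp_all
  have "polytabloid (hook_shape n) (2*n-1) (tab_cols xs ys) T = Z * (D n xs * D (n - 1) ys)"
    using polytabloid_tab_cols_eq_det[OF n len dist entries] by (simp add: Z_def D_def)
  also have "\<dots> = Z * (\<Sum>i<n. (-1) ^ (n - 1 - i) *
      (D n (ys @ [xs ! i]) * D (n - 1) (take i xs @ drop (Suc i) xs)))"
    using det_col_mat_exchange[OF len_m, of "row_indicator T"] by (simp add: D_def m lessThan_Suc_atMost)
  also have "\<dots> = (\<Sum>i<n. (-1) ^ (n - 1 - i) *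
      polytabloid (hook_shape n) (2*n-1) (tab_cols (ys @ [xs ! i]) (take i xs @ drop (Suc i) xs)) T)"
    unfolding sum_distrib_left by (intro sum.cong refl, subst exchanged) (auto simp: ac_simps)
  finally show "polytabloid (hook_shape n) (2*n-1) (tab_cols xs ys) T = \<dots>" .
qed

lemma valid_bracket_exchange:
  assumes "valid_bracket n b" and "i < n"
  shows "valid_bracket n (snd b @ [fst b ! i], take i (fst b) @ drop (Suc i) (fst b))"
proof -
  have ms: "mset ((snd b @ [fst b ! i]) @ take i (fst b) @ drop (Suc i) (fst b)) = mset (fst b @ snd b)"
    using assms by (intro mset_exchange_nth) (simp add: valid_bracket_def)
  show ?thesis
    using assms mset_eq_imp_distinct_iff[OF ms] mset_eq_setD[OF ms]
    by (simp add: valid_bracket_def)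
qed

lemma finite_valid_brackets: "finite {b. valid_bracket n b}"
proof (rule finite_subset)
  show "{b. valid_bracket n b} \<subseteq>
      {xs. set xs \<subseteq> {1..2*n-1} \<and> length xs = n} \<times> {ys. set ys \<subseteq> {1..2*n-1} \<and> length ys = n - 1}"
    by (auto simp: valid_bracket_def)
  show "finite ({xs. set xs \<subseteq> {1..2*n-1} \<and> length xs = n} \<times> {ys. set ys \<subseteq> {1..2*n-1} \<and> length ys = n - 1})"
    by (intro finite_cartesian_product finite_lists_length_eq) auto
qed

lemma Psi_lin_phi_lin:
  assumes "n \<ge> 1"
  shows "Psi_lin n (phi_lin n c) = (\<lambda>T. 0)"
proof
  fix T
  define VB where "VB = {b. valid_bracket n b}"
  define E where "E b = polytabloid (hook_shape n) (2*n-1) (tab_cols (fst b) (snd b)) T" for b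
  define X where "X b i = (snd b @ [fst b ! i], take i (fst b) @ drop (Suc i) (fst b))"
    for b :: "nat list \<times> nat list" and i
  have "(\<Sum>b'\<in>VB. phi_gen n b b' * E b') = 0" if b: "b \<in> VB" for b
  proof -
    have XV: "X b i \<in> VB" if "i < n" for i
      using valid_bracket_exchange[OF _ that, of b] b by (simp add: VB_def X_def)
    have "(\<Sum>b'\<in>VB. phi_gen n b b' * E b') =
        (\<Sum>b'\<in>VB. (if b' = b then E b' else 0) - (\<Sum>i<n. (-1) ^ (n - 1 - i) * (if b' = X b i then E b' else 0)))"
      by (intro sum.cong refl)
         (simp add: phi_gen_def X_def left_diff_distrib sum_distrib_right mult.assoc if_distrib[of "\<lambda>x. x * _"] cong: if_cong)
    also have "\<dots> = E b - (\<Sum>i<n. (-1) ^ (n - 1 - i) * E (X b i))"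
      using finite_valid_brackets b XV unfolding sum_subtractf VB_def
      by (subst sum.swap) (simp add: sum_distrib_left[symmetric] sum.delta')
    also have "\<dots> = 0"
      using polytabloid_hook_exchange[OF assms, of "fst b" "snd b"] b
      by (simp add: VB_def valid_bracket_def E_def X_def)
    finally show ?thesis .
  qed
  moreover have "Psi_lin n (phi_lin n c) T = (\<Sum>b\<in>VB. c b * (\<Sum>b'\<in>VB. phi_gen n b b' * E b'))"
    unfolding Psi_lin_def phi_lin_def VB_def[symmetric] E_def[symmetric]
    by (simp add: sum_distrib_left sum_distrib_right ac_simps) (rule sum.swap)
  ultimately show "Psi_lin n (phi_lin n c) T = 0"
    by simp
qed

theorem mainTheorem10:
  fixes n :: nat and xs ys :: "nat list"
  assumes "n \<ge> 2"
    and "length xs = n" and "length ys = n - 1"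
    and "distinct (xs @ ys)" and "set (xs @ ys) = {1..2*n-1}"
  shows "polytabloid (hook_shape n) (2*n-1) (tab_cols xs ys) =
           (\<lambda>T. \<Sum>i<n. (-1) ^ (n - 1 - i) *
              polytabloid (hook_shape n) (2*n-1)
                (tab_cols (ys @ [xs ! i]) (take i xs @ drop (Suc i) xs)) T)
         \<and> (\<forall>c. (\<forall>b. \<not> valid_bracket n b \<longrightarrow> c b = 0) \<longrightarrow> Psi_lin n (phi_lin n c) = (\<lambda>T. 0))"
proof -
  have "n \<ge> 1" using assms(1) by simp
  then show ?thesis
    using polytabloid_hook_exchange[OF _ assms(2-5)] Psi_lin_phi_lin by blast
qed

end
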